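(* Let $R$ be a $\Bbbk$-algebra, $\hbar\in Z(R)$ a regular central element, $R_0=R/\hbar R$ with projection $\theta:R\to R_0$, $R_0$ module-finite over $Z(R_0)$, and $\iota:R_0\to R$ a linear section of $\theta$ such that $[\iota(z),r]\in\hbar^NR$ for all $z\in Z(R_0)$, $r\in R$ and some positive integer $N$. Let $\partial_z(w)=\theta([\iota(z),\widetilde w]/\hbar^N)$ ($\widetilde w\in\theta^{-1}(w)$) and $\{z,z'\}=\partial_z(z')$ the resulting Poisson bracket on $Z(R_0)$. (1) If $C\subseteq Z(R_0)$ is a Poisson subalgebra for this bracket and $R_0$ is module-finite over $C$, then $R_0$ is a Poisson $C$-order via the restriction of $\partial$ to $C$. (2) If moreover the restriction $\iota|_C:C\to R$ is an algebra homomorphism, then $\partial_{zz'}(w)=z\,\partial_{z'}(w)+z'\,\partial_z(w)$ for all $z,z'\in C$, $w\in R_0$.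
   Context: $\Bbbk$ is a field, $[r,r']=rr'-r'r$. A Poisson $C$-order is an algebra $A$ module-finite over a central subalgebra $C$ with a linear map $\partial:C\to\mathrm{Der}(A/C)$ (derivations of $A$ preserving $C$) such that $\{z,z'\}=\partial_z(z')$ makes $C$ a Poisson algebra. The map $\partial$ above is well defined and makes $R_0$ a Poisson $Z(R_0)$-order. *)

theory Defs
  imports Main
begin

definition is_algebra :: "('k::field \<Rightarrow> 'a::ring_1 \<Rightarrow> 'a) \<Rightarrow> bool" where
  "is_algebra sc \<longleftrightarrow>
     (\<forall>a x y. sc a (x + y) = sc a x + sc a y) \<and>
     (\<forall>a b x. sc (a + b) x = sc a x + sc b x) \<and>
     (\<forall>a b x. sc (a * b) x = sc a (sc b x)) \<and>
     (\<forall>x. sc 1 x = x) \<and>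
     (\<forall>a x y. sc a (x * y) = sc a x * y) \<and>
     (\<forall>a x y. sc a (x * y) = x * sc a y)"

definition k_linear :: "('k::field \<Rightarrow> 'a::ring_1 \<Rightarrow> 'a) \<Rightarrow> ('k \<Rightarrow> 'b::ring_1 \<Rightarrow> 'b)
    \<Rightarrow> ('a \<Rightarrow> 'b) \<Rightarrow> bool" where
  "k_linear sa sb f \<longleftrightarrow> (\<forall>x y. f (x + y) = f x + f y) \<and> (\<forall>a x. f (sa a x) = sb a (f x))"

definition center :: "'a::ring_1 set" where
  "center = {z. \<forall>w. z * w = w * z}"

definition commutator :: "'a::ring_1 \<Rightarrow> 'a \<Rightarrow> 'a" where
  "commutator r r' = r * r' - r' * r"

definition is_subalgebra :: "('k::field \<Rightarrow> 'a::ring_1 \<Rightarrow> 'a) \<Rightarrow> 'a set \<Rightarrow> bool" where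
  "is_subalgebra sc C \<longleftrightarrow> 1 \<in> C \<and> (\<forall>x\<in>C. \<forall>y\<in>C. x + y \<in> C \<and> x * y \<in> C)
      \<and> (\<forall>a. \<forall>x\<in>C. sc a x \<in> C)"

definition module_finite :: "'a::ring_1 set \<Rightarrow> bool" where
  "module_finite C \<longleftrightarrow> (\<exists>S. finite S \<and>
      (\<forall>a. \<exists>f. (\<forall>s\<in>S. f s \<in> C) \<and> a = (\<Sum>s\<in>S. f s * s)))"

definition is_derivation :: "('k::field \<Rightarrow> 'a::ring_1 \<Rightarrow> 'a) \<Rightarrow> ('a \<Rightarrow> 'a) \<Rightarrow> bool" where
  "is_derivation sc D \<longleftrightarrow> k_linear sc sc D \<and> (\<forall>x y. D (x * y) = D x * y + x * D y)"

definition is_derivation_rel :: "('k::field \<Rightarrow> 'a::ring_1 \<Rightarrow> 'a) \<Rightarrow> 'a set \<Rightarrow> ('a \<Rightarrow> 'a) \<Rightarrow> bool" where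
  "is_derivation_rel sc C D \<longleftrightarrow> is_derivation sc D \<and> (\<forall>c\<in>C. D c \<in> C)"

definition poisson_algebra :: "('k::field \<Rightarrow> 'a::ring_1 \<Rightarrow> 'a) \<Rightarrow> 'a set \<Rightarrow> ('a \<Rightarrow> 'a \<Rightarrow> 'a) \<Rightarrow> bool" where
  "poisson_algebra sc C br \<longleftrightarrow>
     is_subalgebra sc C \<and> (\<forall>x\<in>C. \<forall>y\<in>C. x * y = y * x) \<and>
     (\<forall>x\<in>C. \<forall>y\<in>C. br x y \<in> C) \<and>
     (\<forall>x\<in>C. \<forall>y\<in>C. \<forall>z\<in>C. br (x + y) z = br x z + br y z \<and> br z (x + y) = br z x + br z y) \<and>
     (\<forall>a. \<forall>x\<in>C. \<forall>y\<in>C. br (sc a x) y = sc a (br x y) \<and> br x (sc a y) = sc a (br x y)) \<and>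
     (\<forall>x\<in>C. br x x = 0) \<and>
     (\<forall>x\<in>C. \<forall>y\<in>C. br x y = - br y x) \<and>
     (\<forall>x\<in>C. \<forall>y\<in>C. \<forall>z\<in>C. br x (br y z) = br (br x y) z + br y (br x z)) \<and>
     (\<forall>x\<in>C. \<forall>y\<in>C. \<forall>z\<in>C. br x (y * z) = br x y * z + y * br x z)"

text \<open>A is a Poisson C-order via d (only values d z for z in C matter):
  C is a central subalgebra, A module-finite over C, z \<mapsto> d z is a k-linear map
  C \<rightarrow> Der(A/C), and {z,z'} = d z z' makes C a Poisson algebra.\<close>
definition poisson_order :: "('k::field \<Rightarrow> 'a::ring_1 \<Rightarrow> 'a) \<Rightarrow> 'a set \<Rightarrow> ('a \<Rightarrow> 'a \<Rightarrow> 'a) \<Rightarrow> bool" where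
  "poisson_order sc C d \<longleftrightarrow>
     is_subalgebra sc C \<and> C \<subseteq> center \<and> module_finite C \<and>
     (\<forall>z\<in>C. is_derivation_rel sc C (d z)) \<and>
     (\<forall>z\<in>C. \<forall>z'\<in>C. d (z + z') = (\<lambda>w. d z w + d z' w)) \<and>
     (\<forall>a. \<forall>z\<in>C. d (sc a z) = (\<lambda>w. sc a (d z w))) \<and>
     poisson_algebra sc C (\<lambda>z z'. d z z')"

text \<open>The map \<partial>: \<partial>_z(w) = \<theta>([\<iota>(z), w~]/\<hbar>^N), using the lift w~ = \<iota>(w).\<close>
definition pdel :: "('r::ring_1 \<Rightarrow> 'r0::ring_1) \<Rightarrow> ('r0 \<Rightarrow> 'r) \<Rightarrow> 'r \<Rightarrow> nat \<Rightarrow> 'r0 \<Rightarrow> 'r0 \<Rightarrow> 'r0" where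
  "pdel \<theta> \<iota> h N z w = \<theta> (THE x. h ^ N * x = commutator (\<iota> z) (\<iota> w))"

end

theory Submission
  imports Defs
begin

text \<open>
  For \<open>a\<close> in the quasi-center \<open>{a. [a, R] \<subseteq> \<hbar>\<^sup>N R}\<close> write \<open>dcomm a r\<close> for the unique \<open>x\<close>
  with \<open>\<hbar>\<^sup>N x = [a, r]\<close>; uniqueness is regularity of \<open>\<hbar>\<close>. The commutator identities (additivity,
  the Leibniz rule in either argument, antisymmetry, Jacobi) hold up to the common factor \<open>\<hbar>\<^sup>N\<close>,
  which cancels, so \<open>dcomm\<close> inherits them. Since \<open>dcomm a\<close> maps \<open>\<hbar>R\<close> into \<open>\<hbar>R\<close>, after applying
  \<open>\<theta>\<close> the lift of \<open>w\<close> no longer matters, so \<open>\<partial>\<^sub>z w = \<theta> (dcomm (\<iota> z) (\<iota> w))\<close> inherits the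
  identities as well, and these are exactly the axioms of a Poisson order.
\<close>

lemma center_commute: "z \<in> center \<Longrightarrow> z * w = w * z"
  unfolding center_def by blast

lemma power_in_center: "z \<in> center \<Longrightarrow> z ^ n \<in> center"
  unfolding center_def by (simp add: power_commuting_commutes)

lemma commutator_add_right: "commutator a (r + s) = commutator a r + commutator a s"
  unfolding commutator_def by (simp add: algebra_simps)

lemma commutator_add_left: "commutator (a + b) r = commutator a r + commutator b r"
  unfolding commutator_def by (simp add: algebra_simps)

lemma commutator_diff_right: "commutator a (r - s) = commutator a r - commutator a s"
  unfolding commutator_def by (simp add: algebra_simps)

lemma commutator_mult_right: "commutator a (r * s) = commutator a r * s + r * commutator a s"
  unfolding commutator_def by (simp add: algebra_simps)

lemma commutator_mult_left: "commutator (a * b) r = a * commutator b r + commutator a r * b"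
  unfolding commutator_def by (simp add: algebra_simps)

lemma commutator_self: "commutator a a = 0"
  unfolding commutator_def by simp

lemma commutator_swap: "commutator r a = - commutator a r"
  unfolding commutator_def by simp

lemma commutator_jacobi:
  "commutator a (commutator b c) = commutator (commutator a b) c + commutator b (commutator a c)"
  unfolding commutator_def by (simp add: algebra_simps)

lemma commutator_center_mult_right:
  assumes "c \<in> center" shows "commutator a (c * s) = c * commutator a s"
proof -
  have "a * (c * s) = c * (a * s)"
    by (metis assms center_commute mult.assoc)
  then show ?thesis
    by (simp add: commutator_def right_diff_distrib mult.assoc)
qed

lemma commutator_center_mult_left:
  "c \<in> center \<Longrightarrow> commutator (c * s) a = c * commutator s a"
  by (metis commutator_swap commutator_center_mult_right mult_minus_right)

lemma is_algebra_add: "is_algebra sc \<Longrightarrow> sc c (x + y) = sc c x + sc c y"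
  unfolding is_algebra_def by blast

lemma is_algebra_diff: "is_algebra sc \<Longrightarrow> sc c (x - y) = sc c x - sc c y"
  using is_algebra_add[of sc c "x - y" y] by (simp add: eq_diff_eq)

lemma is_algebra_mult_left: "is_algebra sc \<Longrightarrow> sc c (x * y) = sc c x * y"
  unfolding is_algebra_def by blast

lemma is_algebra_mult_right: "is_algebra sc \<Longrightarrow> sc c (x * y) = x * sc c y"
  unfolding is_algebra_def by blast

lemma commutator_scale_right:
  "is_algebra sc \<Longrightarrow> commutator a (sc c r) = sc c (commutator a r)"
  unfolding commutator_def
  by (simp add: is_algebra_diff is_algebra_mult_right[of sc c a r] is_algebra_mult_left[of sc c r a])

lemma commutator_scale_left:
  "is_algebra sc \<Longrightarrow> commutator (sc c a) r = sc c (commutator a r)"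
  unfolding commutator_def
  by (simp add: is_algebra_diff is_algebra_mult_left[of sc c a r] is_algebra_mult_right[of sc c r a])

lemma k_linear_add: "k_linear sa sb f \<Longrightarrow> f (x + y) = f x + f y"
  unfolding k_linear_def by blast

lemma k_linear_scale: "k_linear sa sb f \<Longrightarrow> f (sa c x) = sb c (f x)"
  unfolding k_linear_def by blast

lemma k_linear_diff: "k_linear sa sb f \<Longrightarrow> f (x - y) = f x - f y"
  using k_linear_add[of sa sb f "x - y" y] by (simp add: eq_diff_eq)

lemma k_linear_minus: "k_linear sa sb f \<Longrightarrow> f (- x) = - f x"
  using k_linear_diff[of sa sb f 0 0] k_linear_diff[of sa sb f 0 x] by simp

locale divided_commutator =
  fixes h :: "'r::ring_1" and N :: nat
  assumes h_central: "h \<in> center"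
    and h_regular: "\<forall>x. h * x = 0 \<longrightarrow> x = 0"
begin

definition quasi_center :: "'r set" where
  "quasi_center = {a. \<forall>r. \<exists>x. commutator a r = h ^ N * x}"

definition dcomm :: "'r \<Rightarrow> 'r \<Rightarrow> 'r" where
  "dcomm a r = (THE x. h ^ N * x = commutator a r)"

lemma hpow_mult_eq_0: "h ^ n * x = 0 \<Longrightarrow> x = 0"
proof (induction n)
  case (Suc n)
  then have "h * (h ^ n * x) = 0"
    by (simp add: mult.assoc)
  then show ?case
    using h_regular Suc.IH by blast
qed simp

lemma hpow_mult_cancel: "h ^ n * x = h ^ n * y \<Longrightarrow> x = y"
  using hpow_mult_eq_0[of n "x - y"] by (simp add: right_diff_distrib)

lemma hpow_mult_left_commute: "h ^ n * (x * y) = x * (h ^ n * y)"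
  using center_commute[OF power_in_center[OF h_central], of n x] by (simp flip: mult.assoc)

lemma dcomm_eqI: "h ^ N * x = commutator a r \<Longrightarrow> dcomm a r = x"
  unfolding dcomm_def by (rule the_equality) (auto intro: hpow_mult_cancel[of N])

lemma hpow_mult_dcomm:
  assumes "a \<in> quasi_center" shows "h ^ N * dcomm a r = commutator a r"
proof -
  obtain x where "commutator a r = h ^ N * x"
    using assms unfolding quasi_center_def by blast
  then show ?thesis
    using dcomm_eqI by simp
qed

lemma dcomm_self: "dcomm a a = 0"
  by (rule dcomm_eqI) (simp add: commutator_self)

lemma dcomm_swap: "a \<in> quasi_center \<Longrightarrow> dcomm r a = - dcomm a r"
  by (rule dcomm_eqI) (simp add: hpow_mult_dcomm commutator_swap[of r])

lemma dcomm_add_right: "a \<in> quasi_center \<Longrightarrow> dcomm a (r + s) = dcomm a r + dcomm a s"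
  by (rule dcomm_eqI) (simp add: distrib_left hpow_mult_dcomm commutator_add_right)

lemma dcomm_diff_right: "a \<in> quasi_center \<Longrightarrow> dcomm a (r - s) = dcomm a r - dcomm a s"
  by (rule dcomm_eqI) (simp add: right_diff_distrib hpow_mult_dcomm commutator_diff_right)

lemma dcomm_center_mult_right:
  "a \<in> quasi_center \<Longrightarrow> c \<in> center \<Longrightarrow> dcomm a (c * s) = c * dcomm a s"
  by (rule dcomm_eqI)
    (simp add: hpow_mult_left_commute hpow_mult_dcomm commutator_center_mult_right)

lemma dcomm_scale_right:
  "is_algebra sc \<Longrightarrow> a \<in> quasi_center \<Longrightarrow> dcomm a (sc c r) = sc c (dcomm a r)"
  by (rule dcomm_eqI) (simp add: commutator_scale_right hpow_mult_dcomm flip: is_algebra_mult_right)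

lemma dcomm_mult_right:
  assumes a: "a \<in> quasi_center"
  shows "dcomm a (r * s) = dcomm a r * s + r * dcomm a s"
proof (rule dcomm_eqI)
  have "h ^ N * (dcomm a r * s + r * dcomm a s) = (h ^ N * dcomm a r) * s + r * (h ^ N * dcomm a s)"
    by (simp add: distrib_left hpow_mult_left_commute mult.assoc)
  also have "\<dots> = commutator a (r * s)"
    by (simp add: hpow_mult_dcomm a commutator_mult_right)
  finally show "h ^ N * (dcomm a r * s + r * dcomm a s) = commutator a (r * s)" .
qed

lemma dcomm_add_left:
  "a \<in> quasi_center \<Longrightarrow> b \<in> quasi_center \<Longrightarrow> dcomm (a + b) r = dcomm a r + dcomm b r"
  by (rule dcomm_eqI) (simp add: distrib_left hpow_mult_dcomm commutator_add_left)

lemma dcomm_scale_left: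
  "is_algebra sc \<Longrightarrow> a \<in> quasi_center \<Longrightarrow> dcomm (sc c a) r = sc c (dcomm a r)"
  by (rule dcomm_eqI) (simp add: commutator_scale_left hpow_mult_dcomm flip: is_algebra_mult_right)

lemma dcomm_mult_left:
  assumes a: "a \<in> quasi_center" and b: "b \<in> quasi_center"
  shows "dcomm (a * b) r = a * dcomm b r + dcomm a r * b"
proof (rule dcomm_eqI)
  have "h ^ N * (a * dcomm b r + dcomm a r * b) = a * (h ^ N * dcomm b r) + (h ^ N * dcomm a r) * b"
    by (simp add: distrib_left hpow_mult_left_commute mult.assoc)
  also have "\<dots> = commutator (a * b) r"
    by (simp add: hpow_mult_dcomm a b commutator_mult_left)
  finally show "h ^ N * (a * dcomm b r + dcomm a r * b) = commutator (a * b) r" .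
qed

lemma hpow_mult_dcomm_swap: "c \<in> quasi_center \<Longrightarrow> h ^ N * dcomm r c = commutator r c"
  by (simp add: dcomm_swap hpow_mult_dcomm commutator_swap[of r])

lemma dcomm_jacobi:
  assumes a: "a \<in> quasi_center" and b: "b \<in> quasi_center" and c: "c \<in> quasi_center"
  shows "dcomm a (dcomm b c) = dcomm (dcomm a b) c + dcomm b (dcomm a c)"
proof -
  have hN: "h ^ N \<in> center"
    using h_central by (rule power_in_center)
  have nested: "commutator p (commutator q r) = h ^ N * (h ^ N * dcomm p (dcomm q r))"
    if "p \<in> quasi_center" "q \<in> quasi_center" for p q r
  proof -
    have "commutator p (commutator q r) = commutator p (h ^ N * dcomm q r)"
      by (simp add: hpow_mult_dcomm that)
    also have "\<dots> = h ^ N * commutator p (dcomm q r)"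
      by (rule commutator_center_mult_right[OF hN])
    finally show ?thesis
      by (simp add: hpow_mult_dcomm that)
  qed
  have bc: "commutator a (commutator b c) = h ^ N * (h ^ N * dcomm a (dcomm b c))"
    using a b by (rule nested)
  have ac: "commutator b (commutator a c) = h ^ N * (h ^ N * dcomm b (dcomm a c))"
    using b a by (rule nested)
  have "commutator (commutator a b) c = - commutator c (commutator a b)"
    by (rule commutator_swap)
  also have "\<dots> = h ^ N * (h ^ N * dcomm (dcomm a b) c)"
    by (simp add: nested c a dcomm_swap[OF c])
  finally have ab: "commutator (commutator a b) c = h ^ N * (h ^ N * dcomm (dcomm a b) c)" .
  have "h ^ N * (h ^ N * dcomm a (dcomm b c))
      = h ^ N * (h ^ N * (dcomm (dcomm a b) c + dcomm b (dcomm a c)))"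
    using commutator_jacobi[of a b c] by (simp only: ab ac bc distrib_left)
  then have "h ^ N * dcomm a (dcomm b c) = h ^ N * (dcomm (dcomm a b) c + dcomm b (dcomm a c))"
    by (rule hpow_mult_cancel)
  then show ?thesis
    by (rule hpow_mult_cancel)
qed

end

locale quantization = divided_commutator h N
  for h :: "'r::ring_1" and N :: nat +
  fixes sR :: "'k::field \<Rightarrow> 'r \<Rightarrow> 'r" and s0 :: "'k \<Rightarrow> 'r0::ring_1 \<Rightarrow> 'r0"
    and \<theta> :: "'r \<Rightarrow> 'r0" and \<iota> :: "'r0 \<Rightarrow> 'r"
  assumes algR: "is_algebra sR"
    and theta_lin: "k_linear sR s0 \<theta>"
    and theta_mult: "\<forall>x y. \<theta> (x * y) = \<theta> x * \<theta> y"
    and theta_ker: "\<forall>x. \<theta> x = 0 \<longleftrightarrow> (\<exists>r. x = h * r)"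
    and iota_lin: "k_linear s0 sR \<iota>"
    and iota_section: "\<forall>w. \<theta> (\<iota> w) = w"
    and comm_div: "\<forall>z\<in>(center :: 'r0 set). \<forall>r. \<exists>x. commutator (\<iota> z) r = h ^ N * x"
begin

abbreviation bracket :: "'r0 \<Rightarrow> 'r0 \<Rightarrow> 'r0" where
  "bracket \<equiv> pdel \<theta> \<iota> h N"

lemma iota_quasi_center: "z \<in> center \<Longrightarrow> \<iota> z \<in> quasi_center"
  using comm_div unfolding quasi_center_def by blast

lemma bracket_eq: "bracket z w = \<theta> (dcomm (\<iota> z) (\<iota> w))"
  unfolding pdel_def dcomm_def ..

lemma theta_dcomm_cong:
  assumes a: "a \<in> quasi_center" and eq: "\<theta> r = \<theta> r'"
  shows "\<theta> (dcomm a r) = \<theta> (dcomm a r')"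
proof -
  have "\<theta> (r - r') = 0"
    using eq by (simp add: k_linear_diff[OF theta_lin])
  then obtain s where "r - r' = h * s"
    using theta_ker by blast
  then have "dcomm a r - dcomm a r' = h * dcomm a s"
    by (metis a h_central dcomm_diff_right dcomm_center_mult_right)
  then have "\<theta> (dcomm a r - dcomm a r') = 0"
    using theta_ker by blast
  then show ?thesis
    by (simp add: k_linear_diff[OF theta_lin])
qed

lemma bracket_eq_lift:
  "z \<in> center \<Longrightarrow> \<theta> r = w \<Longrightarrow> bracket z w = \<theta> (dcomm (\<iota> z) r)"
  by (simp add: bracket_eq iota_section iota_quasi_center theta_dcomm_cong)

lemma bracket_add_right:
  assumes "z \<in> center" shows "bracket z (w + w') = bracket z w + bracket z w'"
proof -
  have "bracket z (w + w') = \<theta> (dcomm (\<iota> z) (\<iota> w + \<iota> w'))"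
    using assms by (simp add: bracket_eq_lift k_linear_add[OF theta_lin] iota_section)
  then show ?thesis
    using assms by (simp add: dcomm_add_right iota_quasi_center k_linear_add[OF theta_lin] bracket_eq)
qed

lemma bracket_scale_right: "z \<in> center \<Longrightarrow> bracket z (s0 c w) = s0 c (bracket z w)"
  by (simp add: bracket_eq k_linear_scale[OF iota_lin] k_linear_scale[OF theta_lin]
      dcomm_scale_right[OF algR] iota_quasi_center)

lemma bracket_mult_right:
  assumes "z \<in> center" shows "bracket z (w * w') = bracket z w * w' + w * bracket z w'"
proof -
  have "bracket z (w * w') = \<theta> (dcomm (\<iota> z) (\<iota> w * \<iota> w'))"
    using assms by (simp add: bracket_eq_lift theta_mult iota_section)
  then show ?thesis
    using assms by (simp add: dcomm_mult_right iota_quasi_center k_linear_add[OF theta_lin]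
        theta_mult iota_section bracket_eq)
qed

lemma bracket_add_left:
  "z \<in> center \<Longrightarrow> z' \<in> center \<Longrightarrow> bracket (z + z') w = bracket z w + bracket z' w"
  by (simp add: bracket_eq k_linear_add[OF iota_lin] k_linear_add[OF theta_lin]
      dcomm_add_left iota_quasi_center)

lemma bracket_scale_left: "z \<in> center \<Longrightarrow> bracket (s0 c z) w = s0 c (bracket z w)"
  by (simp add: bracket_eq k_linear_scale[OF iota_lin] k_linear_scale[OF theta_lin]
      dcomm_scale_left[OF algR] iota_quasi_center)

lemma bracket_self: "bracket z z = 0"
  using k_linear_diff[OF theta_lin, of 0 0] by (simp add: bracket_eq dcomm_self)

lemma bracket_swap: "w \<in> center \<Longrightarrow> bracket u w = - bracket w u"
  by (simp add: bracket_eq dcomm_swap iota_quasi_center k_linear_minus[OF theta_lin])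

lemma bracket_jacobi:
  assumes x: "x \<in> center" and y: "y \<in> center" and z: "z \<in> center"
  shows "bracket x (bracket y z) = bracket (bracket x y) z + bracket y (bracket x z)"
proof -
  have "bracket x (bracket y z) = \<theta> (dcomm (\<iota> x) (dcomm (\<iota> y) (\<iota> z)))"
    by (rule bracket_eq_lift[OF x]) (simp add: bracket_eq)
  moreover have "bracket y (bracket x z) = \<theta> (dcomm (\<iota> y) (dcomm (\<iota> x) (\<iota> z)))"
    by (rule bracket_eq_lift[OF y]) (simp add: bracket_eq)
  moreover have "bracket (bracket x y) z = \<theta> (dcomm (dcomm (\<iota> x) (\<iota> y)) (\<iota> z))"
  proof -
    have "bracket (bracket x y) z = - bracket z (bracket x y)"
      by (rule bracket_swap[OF z])
    also have "\<dots> = - \<theta> (dcomm (\<iota> z) (dcomm (\<iota> x) (\<iota> y)))"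
      using bracket_eq_lift[OF z, of "dcomm (\<iota> x) (\<iota> y)"] by (simp add: bracket_eq)
    also have "\<dots> = \<theta> (dcomm (dcomm (\<iota> x) (\<iota> y)) (\<iota> z))"
      using dcomm_swap[OF iota_quasi_center[OF z], of "dcomm (\<iota> x) (\<iota> y)"]
      by (simp add: k_linear_minus[OF theta_lin])
    finally show ?thesis .
  qed
  ultimately show ?thesis
    using dcomm_jacobi[OF iota_quasi_center[OF x] iota_quasi_center[OF y] iota_quasi_center[OF z]]
    by (simp add: k_linear_add[OF theta_lin])
qed

lemma bracket_mult_left:
  assumes z: "z \<in> center" and z': "z' \<in> center" and mult: "\<iota> (z * z') = \<iota> z * \<iota> z'"
  shows "bracket (z * z') w = z * bracket z' w + z' * bracket z w"
proof -
  have "bracket (z * z') w = z * bracket z' w + bracket z w * z'"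
    by (simp add: bracket_eq mult dcomm_mult_left iota_quasi_center z z'
        k_linear_add[OF theta_lin] theta_mult iota_section)
  then show ?thesis
    by (simp add: center_commute[OF z'])
qed

lemma bracket_is_derivation: "z \<in> center \<Longrightarrow> is_derivation s0 (bracket z)"
  unfolding is_derivation_def k_linear_def
  by (simp add: bracket_add_right bracket_scale_right bracket_mult_right)

lemma poisson_algebra_bracket:
  assumes sub: "is_subalgebra s0 C" and central: "C \<subseteq> center"
    and closed: "\<forall>z\<in>C. \<forall>z'\<in>C. bracket z z' \<in> C"
  shows "poisson_algebra s0 C bracket"
proof -
  have cen: "x \<in> center" if "x \<in> C" for x
    using central that by blast
  have add: "x + y \<in> C" and scale: "s0 c x \<in> C" if "x \<in> C" "y \<in> C" for x y c
    using sub that unfolding is_subalgebra_def by blast+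
  have antisym: "\<forall>x\<in>C. \<forall>y\<in>C. bracket x y = - bracket y x"
    using bracket_swap cen by blast
  have jacobi: "\<forall>x\<in>C. \<forall>y\<in>C. \<forall>z\<in>C.
      bracket x (bracket y z) = bracket (bracket x y) z + bracket y (bracket x z)"
    using bracket_jacobi cen by blast
  show ?thesis
    unfolding poisson_algebra_def
    by (intro conjI ballI allI sub closed antisym jacobi)
      (simp_all add: cen add scale bracket_add_left bracket_add_right bracket_scale_left
        bracket_scale_right bracket_self bracket_mult_right center_commute)
qed

lemma poisson_order_bracket:
  assumes sub: "is_subalgebra s0 C" and central: "C \<subseteq> center" and fin: "module_finite C"
    and closed: "\<forall>z\<in>C. \<forall>z'\<in>C. bracket z z' \<in> C"
  shows "poisson_order s0 C bracket"
proof -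
  have cen: "x \<in> center" if "x \<in> C" for x
    using central that by blast
  show ?thesis
    unfolding poisson_order_def is_derivation_rel_def
    by (intro conjI ballI allI ext sub central fin poisson_algebra_bracket[OF sub central closed])
      (simp_all add: cen closed bracket_is_derivation bracket_add_left bracket_scale_left)
qed

end

theorem corollary2p5:
  fixes sR :: "'k::field \<Rightarrow> 'r::ring_1 \<Rightarrow> 'r"
    and s0 :: "'k \<Rightarrow> 'r0::ring_1 \<Rightarrow> 'r0"
    and \<theta> :: "'r \<Rightarrow> 'r0" and \<iota> :: "'r0 \<Rightarrow> 'r"
    and h :: 'r and N :: nat and C :: "'r0 set"
  assumes algR: "is_algebra sR" and alg0: "is_algebra s0"
    and h_central: "h \<in> center"
    and h_regular: "\<forall>x. h * x = 0 \<longrightarrow> x = 0"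
    and theta_lin: "k_linear sR s0 \<theta>"
    and theta_mult: "\<forall>x y. \<theta> (x * y) = \<theta> x * \<theta> y" and theta_one: "\<theta> 1 = 1"
    and theta_surj: "surj \<theta>"
    and theta_ker: "\<forall>x. \<theta> x = 0 \<longleftrightarrow> (\<exists>r. x = h * r)"
    and R0_finite_center: "module_finite (center :: 'r0 set)"
    and iota_lin: "k_linear s0 sR \<iota>"
    and iota_section: "\<forall>w. \<theta> (\<iota> w) = w"
    and N_pos: "N > 0"
    and comm_div: "\<forall>z\<in>(center :: 'r0 set). \<forall>r. \<exists>x. commutator (\<iota> z) r = h ^ N * x"
    and C_sub: "is_subalgebra s0 C" and C_center: "C \<subseteq> center"
    and C_poisson: "\<forall>z\<in>C. \<forall>z'\<in>C. pdel \<theta> \<iota> h N z z' \<in> C"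
    and C_finite: "module_finite C"
  shows "poisson_order s0 C (pdel \<theta> \<iota> h N)
    \<and> ((\<forall>z\<in>C. \<forall>z'\<in>C. \<iota> (z * z') = \<iota> z * \<iota> z') \<and> \<iota> 1 = 1 \<longrightarrow>
       (\<forall>z\<in>C. \<forall>z'\<in>C. \<forall>w. pdel \<theta> \<iota> h N (z * z') w
           = z * pdel \<theta> \<iota> h N z' w + z' * pdel \<theta> \<iota> h N z w))"
proof -
  interpret quantization h N sR s0 \<theta> \<iota>
    by unfold_locales (fact assms)+
  have "poisson_order s0 C (pdel \<theta> \<iota> h N)"
    using C_sub C_center C_finite C_poisson by (rule poisson_order_bracket)
  moreover have "pdel \<theta> \<iota> h N (z * z') w = z * pdel \<theta> \<iota> h N z' w + z' * pdel \<theta> \<iota> h N z w"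
    if "\<forall>z\<in>C. \<forall>z'\<in>C. \<iota> (z * z') = \<iota> z * \<iota> z'" "z \<in> C" "z' \<in> C" for z z' w
    using that C_center by (intro bracket_mult_left) auto
  ultimately show ?thesis
    by blast
qed

end
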